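(* Let $\mathcal{S}$ be a finite set of points of interest and, for each history $X$, let $P(\cdot\mid X)$ be a distribution on $\mathcal{S}$ with $\Delta_P\le P(s\mid X)\le1-\Delta_P$ for all $(X,s)$, for some $\Delta_P\in(0,0.5)$. Let $\Theta=\{\theta_1,\dots,\theta_K\}\subset[1,\infty)$ be a finite set of distinct parameters with prior $P_0$ (positive on $\Theta$), and for $\theta\in\Theta$ define the transition model \[ P(s\mid X,a,\theta)=\begin{cases}P(s\mid X)^{1/\theta},& s=a,\\ P(s\mid X)\,\dfrac{1-P(a\mid X)^{1/\theta}}{1-P(a\mid X)}, & s\neq a.\end{cases} \] The true parameter is $\theta_*\in\Theta$. At each time $t=1,2,\dots$, given the history $X_t$, a recommendation $a_t\in\mathcal{S}$ is chosen based on the past, and $s_t\sim P(\cdot\mid X_t,a_t,\theta_* )$ is observed and appended to the history. Let $P_t(\theta)\propto P_0(\theta)\prod_{\tau=1}^tP(s_\tau\mid X_\tau,a_\tau,\theta)$ be the posterior at the end of time $t$, and let $\theta_t$ be sampled from $P_t$ at time step $t$. Define $\Delta_\theta=\min_{\theta\in\Theta,\theta\ne\theta_*}|\theta-\theta_*|$, \[ B=2\max\Big\{\max_{\theta\in\Theta}\max_{p\in[\Delta_P,1-\Delta_P]}\Big|\log\frac{p^{1/\theta}}{p^{1/\theta_*}}\Big|,\ \max_{\theta\in\Theta}\max_{p\in[\Delta_P,1-\Delta_P]}\Big|\log\frac{1-p^{1/\theta}}{1-p^{1/\theta_*}}\Big|\Big\}, \] \[ c_0=\frac{\min\{\ln(1/\Delta_P)\Delta_P,\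 \ln(1/(1-\Delta_P))(1-\Delta_P)\}}{(\max_{\theta\in\Theta}\theta)^2},\qquad \kappa=\Big(\max_{\theta\in\Theta}\theta-\min_{\theta\in\Theta}\theta\Big)^2. \] Then for every $t>2$, \[ \mathbb{E}\big[(\theta_t-\theta_* )^2\mid\theta_*\big]\le\frac{3}{e c_0^2t}\,\frac{1-P_0(\theta_* )}{P_0(\theta_* )}\exp\Big\{-c_0^2\Delta_\theta^2t+\sqrt{2B^2t\ln(K\kappa t^2)}\Big\}+\frac{1}{t^2}. \] *)

theory Defs
  imports "HOL-Analysis.Analysis"
begin

text \<open>Trajectories are lists of steps (a, s, theta): the recommendation a_k, the observed
  point s_k and the posterior sample theta_k, in chronological order.\<close>

type_synonym 's step = "'s \<times> 's \<times> real"

definition rec_of :: "'s step \<Rightarrow> 's" where "rec_of x = fst x"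
definition obs_of :: "'s step \<Rightarrow> 's" where "obs_of x = fst (snd x)"
definition smp_of :: "'s step \<Rightarrow> real" where "smp_of x = snd (snd x)"

definition hist :: "'s list \<Rightarrow> 's step list \<Rightarrow> 's list" where
  "hist X0 tr = X0 @ map obs_of tr"

definition trans_model :: "('s list \<Rightarrow> 's \<Rightarrow> real) \<Rightarrow> 's list \<Rightarrow> 's \<Rightarrow> real \<Rightarrow> 's \<Rightarrow> real" where
  "trans_model P X a \<theta> s =
     (if s = a then P X s powr (1 / \<theta>)
      else P X s * (1 - P X a powr (1 / \<theta>)) / (1 - P X a))"

definition likelihood :: "('s list \<Rightarrow> 's \<Rightarrow> real) \<Rightarrow> 's list \<Rightarrow> 's step list \<Rightarrow> real \<Rightarrow> real" where
  "likelihood P X0 tr \<theta> =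
     (\<Prod>k<length tr. trans_model P (hist X0 (take k tr)) (rec_of (tr ! k)) \<theta> (obs_of (tr ! k)))"

definition posterior :: "('s list \<Rightarrow> 's \<Rightarrow> real) \<Rightarrow> (real \<Rightarrow> real) \<Rightarrow> real set \<Rightarrow> 's list
    \<Rightarrow> 's step list \<Rightarrow> real \<Rightarrow> real" where
  "posterior P P0 \<Theta> X0 tr \<theta> =
     P0 \<theta> * likelihood P X0 tr \<theta> / (\<Sum>\<theta>'\<in>\<Theta>. P0 \<theta>' * likelihood P X0 tr \<theta>')"

text \<open>Probability of a trajectory: at step k+1 the recommendation is drawn from the
  (possibly randomized) policy pi given the past, the observation from the true
  transition model, and the sample from the posterior at the end of that step.\<close>
definition traj_prob :: "('s list \<Rightarrow> 's \<Rightarrow> real) \<Rightarrow> (real \<Rightarrow> real) \<Rightarrow> real set \<Rightarrow> 's list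
    \<Rightarrow> ('s step list \<Rightarrow> 's \<Rightarrow> real) \<Rightarrow> real \<Rightarrow> 's step list \<Rightarrow> real" where
  "traj_prob P P0 \<Theta> X0 \<pi> \<theta>s tr =
     (\<Prod>k<length tr.
        \<pi> (take k tr) (rec_of (tr ! k))
        * trans_model P (hist X0 (take k tr)) (rec_of (tr ! k)) \<theta>s (obs_of (tr ! k))
        * posterior P P0 \<Theta> X0 (take (Suc k) tr) (smp_of (tr ! k)))"

definition expected_sq_err :: "'s set \<Rightarrow> ('s list \<Rightarrow> 's \<Rightarrow> real) \<Rightarrow> (real \<Rightarrow> real) \<Rightarrow> real set
    \<Rightarrow> 's list \<Rightarrow> ('s step list \<Rightarrow> 's \<Rightarrow> real) \<Rightarrow> real \<Rightarrow> nat \<Rightarrow> real" where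
  "expected_sq_err S P P0 \<Theta> X0 \<pi> \<theta>s t =
     (\<Sum>tr\<in>{tr. set tr \<subseteq> S \<times> S \<times> \<Theta> \<and> length tr = t}.
        traj_prob P P0 \<Theta> X0 \<pi> \<theta>s tr * (smp_of (last tr) - \<theta>s)\<^sup>2)"

end

theory Submission
  imports Defs "HOL-Probability.Hoeffding"
begin

text \<open>Fix a wrong parameter \<theta> and let Y be the log-likelihood ratio of \<theta> against theta_*
  along the trajectory.  The posterior weight of \<theta> is at most min 1 (P0 \<theta> / P0 theta_* * exp Y).
  Under theta_* each increment of Y has conditional mean at most -2 c0^2 (\<theta> - theta_*)^2: this is
  Pinsker's inequality for the Bernoulli event s = a combined with the separation
  |p^(1/\<theta>) - p^(1/theta_* )| \<ge> c0 |\<theta> - theta_*|, which comes from concavity of -p ln p.  As the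
  increments lie in an interval of length B, Hoeffding's lemma makes
  exp (l (Y + 2 c0^2 (\<theta> - theta_*)^2 t)) a supermartingale up to a factor exp (l^2 B^2 / 8) per
  step.  A Chernoff bound at deviation \<epsilon> = sqrt (2 B^2 t ln (K \<kappa> t^2)) controls the expected
  posterior weight of \<theta>; weighting by (\<theta> - theta_*)^2 and using x exp (- c x t) \<le> 1 / (e c t)
  gives the claim after summing over \<theta>.\<close>

lemma two_point_hoeffding:
  fixes q l y1 y2 :: real
  assumes "0 \<le> q" "q \<le> 1" "0 \<le> l"
  shows "q * exp (l*y1) + (1-q) * exp (l*y2) \<le> exp (l*(q*y1 + (1-q)*y2) + l^2*(y1-y2)^2/8)"
proof -
  have ordered: "q * exp (l*y1) + (1-q) * exp (l*y2) \<le> exp (l*(q*y1 + (1-q)*y2) + l^2*(y1-y2)^2/8)"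
    if "y2 \<le> y1" "0 \<le> q" "q \<le> 1" for q y1 y2
  proof -
    define h where "h = l*(y1-y2)"
    have "0 \<le> h" using that \<open>0 \<le> l\<close> by (simp add: h_def)
    have pos: "0 < 1 + q*(exp h - 1)"
      using \<open>0 \<le> h\<close> that by (smt (verit) mult_nonneg_nonneg one_le_exp_iff)
    have "1 + q*(exp h - 1) = exp (ln (1 + q*(exp h - 1)))" using pos by simp
    also have "\<dots> \<le> exp (h*q + h^2/8)"
      using Hoeffdings_lemma_aux[of h q] \<open>0 \<le> h\<close> that by simp
    finally have mgf: "1 + q*(exp h - 1) \<le> exp (h*q + h^2/8)" .
    have "q * exp (l*y1) + (1-q) * exp (l*y2) = exp (l*y2) * (1 + q*(exp h - 1))"
      by (simp add: h_def algebra_simps flip: exp_add)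
    also have "\<dots> \<le> exp (l*y2) * exp (h*q + h^2/8)"
      using mgf by (intro mult_left_mono) auto
    also have "\<dots> = exp (l*(q*y1 + (1-q)*y2) + l^2*(y1-y2)^2/8)"
      by (simp add: h_def algebra_simps power2_eq_square flip: exp_add)
    finally show ?thesis .
  qed
  show ?thesis
  proof (cases "y2 \<le> y1")
    case True
    then show ?thesis using ordered assms by blast
  next
    case False
    then show ?thesis
      using ordered[of y1 y2 "1-q"] assms by (simp add: algebra_simps power2_commute)
  qed
qed

lemma bernoulli_pinsker:
  fixes a x :: real
  assumes a: "0 < a" "a < 1" and x: "0 < x" "x < 1"
  shows "a * ln (x/a) + (1-a) * ln ((1-x)/(1-a)) \<le> -2*(x-a)^2"
proof -
  define f where "f = (\<lambda>x. a * ln x - a * ln a + (1-a) * ln (1-x) - (1-a) * ln (1-a) + 2*(x-a)^2)"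
  define f' where "f' = (\<lambda>x::real. a/x - (1-a)/(1-x) + 4*(x-a))"
  have deriv: "DERIV f z :> f' z" if "0 < z" "z < 1" for z
    unfolding f_def f'_def using that
    by (auto intro!: derivative_eq_intros simp: power2_eq_square algebra_simps)
      (simp add: add_divide_distrib[symmetric])
  have f'_sign: "f' z = (a - z) * (1/(z*(1-z)) - 4)" "4 \<le> 1/(z*(1-z))" if "0 < z" "z < 1" for z
  proof -
    show "f' z = (a - z) * (1/(z*(1-z)) - 4)" unfolding f'_def using that by (simp add: field_simps)
    have "z*(1-z) \<le> 1/4" using mult_const_minus_self_real_le[of z 1] by simp
    then show "4 \<le> 1/(z*(1-z))" using that by (simp add: field_simps)
  qed
  have "f a = 0" by (simp add: f_def)
  have "f x \<le> 0"
  proof (cases x a rule: linorder_cases)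
    case less
    obtain z where z: "x < z" "z < a" "f a - f x = (a - x) * f' z"
      using MVT2[of x a f f'] less deriv x a by force
    have "0 \<le> f' z" using f'_sign[of z] z x a by simp
    then show ?thesis using z \<open>f a = 0\<close> less by (smt (verit) mult_nonneg_nonneg)
  next
    case equal
    then show ?thesis using \<open>f a = 0\<close> by simp
  next
    case greater
    obtain z where z: "a < z" "z < x" "f x - f a = (x - a) * f' z"
      using MVT2[of a x f f'] greater deriv x a by force
    have "f' z \<le> 0" using f'_sign[of z] z x a by (simp add: mult_nonpos_nonneg)
    then show ?thesis using z \<open>f a = 0\<close> greater by (smt (verit) mult_nonneg_nonpos)
  qed
  moreover have "a * ln (x/a) + (1-a) * ln ((1-x)/(1-a)) = f x - 2*(x-a)^2"
    using a x by (simp add: f_def ln_div algebra_simps)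
  ultimately show ?thesis by linarith
qed

lemma powr_diff_ge:
  fixes p u w :: real
  assumes "0 < p" "p < 1" "0 < u" "u \<le> w" "w \<le> 1"
  shows "p * (w-u) * (- ln p) \<le> p powr u - p powr w"
proof -
  have "1 + (w-u) * (- ln p) \<le> p powr (u - w)"
    using exp_ge_add_one_self[of "(u-w) * ln p"] assms by (simp add: powr_def algebra_simps)
  moreover have "0 \<le> (w-u) * (- ln p)"
    using assms mult_nonneg_nonpos[of "w-u" "ln p"] by simp
  moreover have "p \<le> p powr w" using powr_mono'[of w 1 p] assms by simp
  ultimately have "p * ((w-u) * (- ln p)) \<le> p powr w * (p powr (u-w) - 1)"
    by (intro mult_mono) auto
  also have "\<dots> = p powr u - p powr w" by (simp add: algebra_simps flip: powr_add)
  finally show ?thesis by simp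
qed

lemma neg_mult_ln_ge_min_endpoints:
  fixes p d :: real
  assumes "0 < d" "d \<le> p" "p \<le> 1 - d"
  shows "min (ln (1/d) * d) (ln (1/(1-d)) * (1-d)) \<le> - p * ln p"
proof -
  have "concave_on {d..1-d} (\<lambda>x. - x * ln x)"
  proof (rule f''_le0_imp_concave)
    show "DERIV (\<lambda>x. - x * ln x) x :> - ln x - 1" if "x \<in> {d..1-d}" for x
      using that \<open>0 < d\<close> by (auto intro!: derivative_eq_intros)
    show "DERIV (\<lambda>x. - ln x - 1) x :> - 1 / x" if "x \<in> {d..1-d}" for x
      using that \<open>0 < d\<close> by (auto intro!: derivative_eq_intros)
  qed (use \<open>0 < d\<close> in auto)
  then have "min (- d * ln d) (- (1-d) * ln (1-d)) \<le> - p * ln p"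
    using concave_on_ge_min assms by fastforce
  moreover have "ln (1/d) = - ln d" "ln (1/(1-d)) = - ln (1-d)" using assms by (simp_all add: ln_div)
  ultimately show ?thesis by (simp add: algebra_simps)
qed

lemma abs_ln_div_le:
  fixes x y c1 c2 :: real
  assumes "0 < c1" "c1 \<le> x" "x \<le> 1" "0 < c2" "c2 \<le> y" "y \<le> 1"
  shows "\<bar>ln (x / y)\<bar> \<le> - ln c1 - ln c2"
proof -
  have "ln (x/y) = ln x - ln y" using assms by (simp add: ln_div)
  moreover have "ln c1 \<le> ln x" "ln x \<le> 0" "ln c2 \<le> ln y" "ln y \<le> 0" using assms by auto
  ultimately show ?thesis by linarith
qed

lemma sq_mult_exp_neg_le:
  fixes c t d :: real
  assumes "0 < c" "0 < t"
  shows "d\<^sup>2 * exp (- (c * d\<^sup>2 * t)) \<le> 1 / (exp 1 * c * t)"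
proof -
  define x where "x = c * d\<^sup>2 * t"
  have "1 + (x - 1) \<le> exp (x - 1)" by (rule exp_ge_add_one_self)
  then have "x * exp (- x) \<le> 1 / exp 1" by (simp add: exp_diff exp_minus field_simps)
  then have "x * exp (- x) / (c * t) \<le> (1 / exp 1) / (c * t)"
    using assms by (intro divide_right_mono) auto
  moreover have "d\<^sup>2 * exp (- x) = x * exp (- x) / (c * t)" using assms by (simp add: x_def field_simps)
  ultimately have "d\<^sup>2 * exp (- x) \<le> (1 / exp 1) / (c * t)" by simp
  then show ?thesis by (simp add: x_def)
qed

lemma min_one_le_split:
  fixes r l y A :: real
  assumes "0 \<le> r" "0 \<le> l"
  shows "min 1 (r * exp y) \<le> r * exp A + exp (l * (y - A))"
proof (cases "y \<le> A")
  case True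
  then have "r * exp y \<le> r * exp A" using assms by (intro mult_left_mono) auto
  then show ?thesis by (smt (verit) exp_gt_zero)
next
  case False
  then have "1 \<le> exp (l * (y - A))" using assms by simp
  moreover have "0 \<le> r * exp A" using assms by simp
  ultimately show ?thesis by linarith
qed

text \<open>The Chernoff parameter l = 4 \<epsilon> / (n B^2) turns the exponent into -4 L.\<close>

lemma chernoff_parameter_exists:
  fixes B L \<epsilon> :: real and n :: nat
  assumes "0 < B" "0 < n" "0 \<le> L" and \<epsilon>: "\<epsilon> = sqrt (2 * B\<^sup>2 * n * L)"
  obtains l where "0 \<le> l" "exp (- l * \<epsilon>) * exp (l\<^sup>2 * B\<^sup>2 / 8) ^ n \<le> exp (- L)"
proof
  define l where "l = 4 * \<epsilon> / (n * B\<^sup>2)"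
  have "0 \<le> \<epsilon>" "\<epsilon>\<^sup>2 = 2 * B\<^sup>2 * n * L" using assms by simp_all
  then show "0 \<le> l" by (simp add: l_def)
  have "exp (- l * \<epsilon>) * exp (l\<^sup>2 * B\<^sup>2 / 8) ^ n = exp (- l * \<epsilon> + n * (l\<^sup>2 * B\<^sup>2 / 8))"
    by (simp only: exp_of_nat_mult[symmetric] exp_add[symmetric])
  also have "- l * \<epsilon> + n * (l\<^sup>2 * B\<^sup>2 / 8) = - 2 * \<epsilon>\<^sup>2 / (n * B\<^sup>2)"
    using assms by (simp add: l_def power2_eq_square field_simps)
  also have "\<dots> = - 4 * L" using \<open>\<epsilon>\<^sup>2 = _\<close> assms by (simp add: field_simps)
  finally show "exp (- l * \<epsilon>) * exp (l\<^sup>2 * B\<^sup>2 / 8) ^ n \<le> exp (- L)"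
    using \<open>0 \<le> L\<close> by simp
qed

lemma le_Max_SUP:
  fixes f :: "'a \<Rightarrow> 'b \<Rightarrow> real"
  assumes "finite A" "x \<in> A" "y \<in> I" and bounded: "\<And>y. y \<in> I \<Longrightarrow> f x y \<le> C"
  shows "f x y \<le> Max ((\<lambda>x. SUP y\<in>I. f x y) ` A)"
proof -
  have "f x y \<le> (SUP y\<in>I. f x y)"
    using assms(3) bounded by (intro cSUP_upper bdd_aboveI2) auto
  also have "\<dots> \<le> Max ((\<lambda>x. SUP y\<in>I. f x y) ` A)"
    using assms(1,2) by (intro Max_ge) auto
  finally show ?thesis .
qed

lemma prod_prefixes_snoc:
  "(\<Prod>k<length (xs @ [x]). f (take k (xs @ [x])) ((xs @ [x]) ! k))
     = (\<Prod>k<length xs. f (take k xs) (xs ! k)) * f xs x"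
  by (simp add: prod.lessThan_Suc nth_append)

locale poi_recommendation =
  fixes S :: "'s set" and P :: "'s list \<Rightarrow> 's \<Rightarrow> real" and \<Delta>P :: real
    and \<Theta> :: "real set" and P0 :: "real \<Rightarrow> real" and \<theta>s :: real
    and X0 :: "'s list" and \<pi> :: "'s step list \<Rightarrow> 's \<Rightarrow> real"
  assumes S_fin: "finite S"
    and P_distr: "\<And>X. (\<Sum>s\<in>S. P X s) = 1"
    and P_bounds: "\<And>X s. s \<in> S \<Longrightarrow> \<Delta>P \<le> P X s \<and> P X s \<le> 1 - \<Delta>P"
    and \<Delta>P_pos: "0 < \<Delta>P" and \<Delta>P_half: "\<Delta>P < 1/2"
    and \<Theta>_fin: "finite \<Theta>"
    and \<Theta>_ge1: "\<And>\<theta>. \<theta> \<in> \<Theta> \<Longrightarrow> 1 \<le> \<theta>"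
    and P0_pos: "\<And>\<theta>. \<theta> \<in> \<Theta> \<Longrightarrow> 0 < P0 \<theta>"
    and P0_sum: "(\<Sum>\<theta>\<in>\<Theta>. P0 \<theta>) = 1"
    and \<theta>s_in: "\<theta>s \<in> \<Theta>"
    and \<pi>_nonneg: "\<And>tr a. 0 \<le> \<pi> tr a"
    and \<pi>_distr: "\<And>tr. (\<Sum>a\<in>S. \<pi> tr a) = 1"
begin

subsection \<open>The transition model\<close>

lemma P_in_unit: "s \<in> S \<Longrightarrow> 0 < P X s \<and> P X s < 1"
  using P_bounds[of s X] \<Delta>P_pos \<Delta>P_half by auto

lemma \<Theta>_pos: "\<theta> \<in> \<Theta> \<Longrightarrow> 0 < \<theta>"
  using \<Theta>_ge1[of \<theta>] by simp

lemma trans_model_pos: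
  assumes "a \<in> S" "s \<in> S" "0 < \<theta>"
  shows "0 < trans_model P X a \<theta> s"
proof -
  have pa: "0 < P X a" "P X a < 1" and "0 < P X s" using P_in_unit assms by auto
  have "P X a powr (1/\<theta>) < 1 powr (1/\<theta>)"
    using pa assms by (intro powr_less_mono2) auto
  then show ?thesis using pa \<open>0 < P X s\<close> unfolding trans_model_def by auto
qed

lemma trans_model_sum:
  assumes "a \<in> S" "0 < \<theta>"
  shows "(\<Sum>s\<in>S. trans_model P X a \<theta> s) = 1"
proof -
  have "0 < P X a" "P X a < 1" using P_in_unit assms by auto
  have rest: "(\<Sum>s\<in>S-{a}. P X s) = 1 - P X a"
    using sum.remove[OF S_fin assms(1), of "P X"] P_distr[of X] by simp
  have "(\<Sum>s\<in>S-{a}. trans_model P X a \<theta> s)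
      = (\<Sum>s\<in>S-{a}. P X s) * (1 - P X a powr (1/\<theta>)) / (1 - P X a)"
    by (simp add: trans_model_def sum_divide_distrib sum_distrib_right)
  also have "\<dots> = 1 - P X a powr (1/\<theta>)" using rest \<open>P X a < 1\<close> by simp
  finally show ?thesis
    using sum.remove[OF S_fin assms(1), of "trans_model P X a \<theta>"]
    by (simp add: trans_model_def)
qed

lemma sum_trans_model_ratio:
  fixes X :: "'s list" and \<theta> :: real and g :: "real \<Rightarrow> real"
  assumes a: "a \<in> S"
  defines "q \<equiv> P X a powr (1/\<theta>)" and "qs \<equiv> P X a powr (1/\<theta>s)"
  shows "(\<Sum>s\<in>S. trans_model P X a \<theta>s s * g (trans_model P X a \<theta> s / trans_model P X a \<theta>s s))
           = qs * g (q/qs) + (1 - qs) * g ((1-q)/(1-qs))"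
proof -
  have hit: "trans_model P X a \<theta> a = q" "trans_model P X a \<theta>s a = qs"
    by (simp_all add: trans_model_def q_def qs_def)
  have miss: "trans_model P X a \<theta> s / trans_model P X a \<theta>s s = (1-q)/(1-qs)"
    if "s \<in> S" "s \<noteq> a" for s
  proof -
    define c where "c = P X s / (1 - P X a)"
    have "c \<noteq> 0" using P_in_unit[OF \<open>s \<in> S\<close>, of X] P_in_unit[OF a, of X] by (simp add: c_def)
    moreover have "trans_model P X a \<theta> s = c * (1 - q)" "trans_model P X a \<theta>s s = c * (1 - qs)"
      using that unfolding trans_model_def q_def qs_def c_def by simp_all
    ultimately show ?thesis by simp
  qed
  have rest: "(\<Sum>s\<in>S-{a}. trans_model P X a \<theta>s s) = 1 - qs"
    using trans_model_sum[OF a \<Theta>_pos[OF \<theta>s_in], of X]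
      sum.remove[OF S_fin a, of "trans_model P X a \<theta>s"] hit
    by simp
  have "(\<Sum>s\<in>S. trans_model P X a \<theta>s s * g (trans_model P X a \<theta> s / trans_model P X a \<theta>s s))
      = qs * g (q/qs) + (\<Sum>s\<in>S-{a}. trans_model P X a \<theta>s s * g ((1-q)/(1-qs)))"
    using miss by (simp add: sum.remove[OF S_fin a] hit)
  also have "\<dots> = qs * g (q/qs) + (1 - qs) * g ((1-q)/(1-qs))"
    by (simp add: rest flip: sum_distrib_right)
  finally show ?thesis .
qed

subsection \<open>Likelihood and posterior\<close>

definition steps :: "'s step set" where
  "steps = S \<times> S \<times> \<Theta>"

lemma steps_memD: "x \<in> steps \<Longrightarrow> rec_of x \<in> S \<and> obs_of x \<in> S \<and> smp_of x \<in> \<Theta>"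
  unfolding steps_def rec_of_def obs_of_def smp_of_def by (simp add: mem_Times_iff)

lemma likelihood_Nil: "likelihood P X0 [] \<theta> = 1"
  unfolding likelihood_def by simp

lemma likelihood_snoc:
  "likelihood P X0 (tr @ [x]) \<theta>
     = likelihood P X0 tr \<theta> * trans_model P (hist X0 tr) (rec_of x) \<theta> (obs_of x)"
  unfolding likelihood_def
  using prod_prefixes_snoc[of "\<lambda>pre y. trans_model P (hist X0 pre) (rec_of y) \<theta> (obs_of y)"] .

lemma likelihood_pos:
  assumes "set tr \<subseteq> steps" "\<theta> \<in> \<Theta>"
  shows "0 < likelihood P X0 tr \<theta>"
  unfolding likelihood_def
proof (rule prod_pos)
  fix k assume "k \<in> {..<length tr}"
  then have "tr ! k \<in> steps" using assms nth_mem by blast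
  then show "0 < trans_model P (hist X0 (take k tr)) (rec_of (tr ! k)) \<theta> (obs_of (tr ! k))"
    using assms \<Theta>_pos steps_memD by (intro trans_model_pos) auto
qed

lemma evidence_pos:
  assumes "set tr \<subseteq> steps"
  shows "0 < (\<Sum>\<theta>'\<in>\<Theta>. P0 \<theta>' * likelihood P X0 tr \<theta>')"
  using \<Theta>_fin \<theta>s_in P0_pos likelihood_pos[OF assms] by (intro sum_pos) auto

lemma posterior_nonneg:
  assumes "set tr \<subseteq> steps" "\<theta> \<in> \<Theta>"
  shows "0 \<le> posterior P P0 \<Theta> X0 tr \<theta>"
  unfolding posterior_def
  using evidence_pos[OF assms(1)] P0_pos[OF assms(2)] likelihood_pos[OF assms] by simp

lemma posterior_sum:
  assumes "set tr \<subseteq> steps"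
  shows "(\<Sum>\<theta>\<in>\<Theta>. posterior P P0 \<Theta> X0 tr \<theta>) = 1"
  unfolding posterior_def using evidence_pos[OF assms]
  by (simp add: sum_divide_distrib[symmetric])

lemma posterior_le_1:
  assumes "set tr \<subseteq> steps" "\<theta> \<in> \<Theta>"
  shows "posterior P P0 \<Theta> X0 tr \<theta> \<le> 1"
  using member_le_sum[OF assms(2), of "posterior P P0 \<Theta> X0 tr"] \<Theta>_fin
    posterior_nonneg[OF assms(1)] posterior_sum[OF assms(1)] by simp

lemma posterior_snoc_sample_indep:
  "posterior P P0 \<Theta> X0 (tr @ [(a,s,u)]) \<theta> = posterior P P0 \<Theta> X0 (tr @ [(a,s,v)]) \<theta>"
  unfolding posterior_def likelihood_snoc by (simp add: rec_of_def obs_of_def)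

subsection \<open>Expectations over trajectories\<close>

definition trajs :: "nat \<Rightarrow> 's step list set" where
  "trajs n = {tr. set tr \<subseteq> steps \<and> length tr = n}"

definition step_prob :: "'s step list \<Rightarrow> 's step \<Rightarrow> real" where
  "step_prob tr x = \<pi> tr (rec_of x) * trans_model P (hist X0 tr) (rec_of x) \<theta>s (obs_of x)
     * posterior P P0 \<Theta> X0 (tr @ [x]) (smp_of x)"

definition expect :: "nat \<Rightarrow> ('s step list \<Rightarrow> real) \<Rightarrow> real" where
  "expect n g = (\<Sum>tr\<in>trajs n. traj_prob P P0 \<Theta> X0 \<pi> \<theta>s tr * g tr)"

lemma traj_prob_eq_prod_step_prob:
  "traj_prob P P0 \<Theta> X0 \<pi> \<theta>s tr = (\<Prod>k<length tr. step_prob (take k tr) (tr ! k))"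
  unfolding traj_prob_def step_prob_def by (intro prod.cong) (auto simp: take_Suc_conv_app_nth)

lemma traj_prob_snoc:
  "traj_prob P P0 \<Theta> X0 \<pi> \<theta>s (tr @ [x]) = traj_prob P P0 \<Theta> X0 \<pi> \<theta>s tr * step_prob tr x"
  unfolding traj_prob_eq_prod_step_prob using prod_prefixes_snoc[of step_prob] .

lemma step_prob_nonneg:
  assumes "set tr \<subseteq> steps" "x \<in> steps"
  shows "0 \<le> step_prob tr x"
proof -
  have "0 \<le> posterior P P0 \<Theta> X0 (tr @ [x]) (smp_of x)"
    using assms steps_memD posterior_nonneg by simp
  moreover have "0 < trans_model P (hist X0 tr) (rec_of x) \<theta>s (obs_of x)"
    using steps_memD[OF assms(2)] \<theta>s_in \<Theta>_pos trans_model_pos by blast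
  ultimately show ?thesis unfolding step_prob_def using \<pi>_nonneg by simp
qed

lemma traj_prob_nonneg:
  assumes "set tr \<subseteq> steps"
  shows "0 \<le> traj_prob P P0 \<Theta> X0 \<pi> \<theta>s tr"
  unfolding traj_prob_eq_prod_step_prob
proof (rule prod_nonneg)
  fix k assume "k \<in> {..<length tr}"
  then have "tr ! k \<in> steps" "set (take k tr) \<subseteq> steps"
    using assms nth_mem set_take_subset by (blast, fastforce)
  then show "0 \<le> step_prob (take k tr) (tr ! k)" by (rule step_prob_nonneg[rotated])
qed

lemma trajs_0: "trajs 0 = {[]}"
  unfolding trajs_def by auto

lemma sum_trajs_Suc: "(\<Sum>tr\<in>trajs (Suc n). g tr) = (\<Sum>tr\<in>trajs n. \<Sum>x\<in>steps. g (tr @ [x]))"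
proof -
  have "trajs (Suc n) = (\<lambda>(tr,x). tr @ [x]) ` (trajs n \<times> steps)"
  proof (intro equalityI subsetI)
    fix tr assume "tr \<in> trajs (Suc n)"
    then have tr: "set tr \<subseteq> steps" "length tr = Suc n" by (auto simp: trajs_def)
    then have "tr \<noteq> []" by auto
    then have "tr = butlast tr @ [last tr]" "last tr \<in> steps" using tr by auto
    moreover have "butlast tr \<in> trajs n" using tr in_set_butlastD by (fastforce simp: trajs_def)
    ultimately show "tr \<in> (\<lambda>(tr,x). tr @ [x]) ` (trajs n \<times> steps)" by force
  qed (auto simp: trajs_def)
  moreover have "inj_on (\<lambda>(tr,x). tr @ [x]) (trajs n \<times> steps)"
    by (auto simp: inj_on_def)
  ultimately show ?thesis by (simp add: sum.reindex sum.cartesian_product split_def)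
qed

lemma sum_steps: "(\<Sum>x\<in>steps. g x) = (\<Sum>a\<in>S. \<Sum>s\<in>S. \<Sum>\<theta>\<in>\<Theta>. g (a,s,\<theta>))"
  unfolding steps_def by (simp add: sum.cartesian_product)

lemma expect_0: "expect 0 g = g []"
  unfolding expect_def trajs_0 by (simp add: traj_prob_def)

lemma expect_Suc:
  "expect (Suc n) g
     = (\<Sum>tr\<in>trajs n. traj_prob P P0 \<Theta> X0 \<pi> \<theta>s tr * (\<Sum>x\<in>steps. step_prob tr x * g (tr @ [x])))"
  unfolding expect_def sum_trajs_Suc traj_prob_snoc by (simp add: sum_distrib_left mult.assoc)

lemma expect_mono:
  assumes "\<And>tr. tr \<in> trajs n \<Longrightarrow> f tr \<le> g tr"
  shows "expect n f \<le> expect n g"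
  unfolding expect_def using assms
  by (intro sum_mono mult_left_mono traj_prob_nonneg) (auto simp: trajs_def)

lemma expect_add: "expect n (\<lambda>tr. f tr + g tr) = expect n f + expect n g"
  unfolding expect_def by (simp add: algebra_simps sum.distrib)

lemma expect_cmult: "expect n (\<lambda>tr. c * f tr) = c * expect n f"
  unfolding expect_def by (simp add: algebra_simps sum_distrib_left)

lemma expect_sum: "expect n (\<lambda>tr. \<Sum>i\<in>I. f i tr) = (\<Sum>i\<in>I. expect n (f i))"
  unfolding expect_def sum_distrib_left by (rule sum.swap)

lemma sum_step_prob_marginal:
  assumes "set tr \<subseteq> steps"
  shows "(\<Sum>x\<in>steps. step_prob tr x * G (rec_of x) (obs_of x))
     = (\<Sum>a\<in>S. \<pi> tr a * (\<Sum>s\<in>S. trans_model P (hist X0 tr) a \<theta>s s * G a s))"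
proof -
  have "(\<Sum>\<theta>\<in>\<Theta>. step_prob tr (a,s,\<theta>) * G a s) = \<pi> tr a * trans_model P (hist X0 tr) a \<theta>s s * G a s"
    if "a \<in> S" "s \<in> S" for a s
  proof -
    have "(\<Sum>\<theta>\<in>\<Theta>. step_prob tr (a,s,\<theta>) * G a s)
        = \<pi> tr a * trans_model P (hist X0 tr) a \<theta>s s * G a s
             * (\<Sum>\<theta>\<in>\<Theta>. posterior P P0 \<Theta> X0 (tr @ [(a,s,\<theta>s)]) \<theta>)"
      unfolding step_prob_def rec_of_def obs_of_def smp_of_def sum_distrib_left
      by (rule sum.cong[OF refl], subst posterior_snoc_sample_indep[where v=\<theta>s]) (simp add: ac_simps)
    also have "(\<Sum>\<theta>\<in>\<Theta>. posterior P P0 \<Theta> X0 (tr @ [(a,s,\<theta>s)]) \<theta>) = 1"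
      using assms that \<theta>s_in by (intro posterior_sum) (auto simp: steps_def)
    finally show ?thesis by simp
  qed
  then show ?thesis
    unfolding sum_steps by (simp add: rec_of_def obs_of_def sum_distrib_left mult.assoc)
qed

lemma sum_step_prob:
  assumes "set tr \<subseteq> steps"
  shows "(\<Sum>x\<in>steps. step_prob tr x) = 1"
  using sum_step_prob_marginal[OF assms, of "\<lambda>_ _. 1"] \<pi>_distr trans_model_sum \<theta>s_in \<Theta>_pos
  by simp

lemma expect_supermartingale:
  assumes "0 \<le> c" and W_nonneg: "\<And>tr. set tr \<subseteq> steps \<Longrightarrow> 0 \<le> W tr"
    and W_step: "\<And>tr. set tr \<subseteq> steps \<Longrightarrow> (\<Sum>x\<in>steps. step_prob tr x * W (tr @ [x])) \<le> c * W tr"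
  shows "expect n W \<le> c ^ n * W []"
proof (induction n)
  case 0
  then show ?case by (simp add: expect_0)
next
  case (Suc n)
  have "expect (Suc n) W \<le> (\<Sum>tr\<in>trajs n. traj_prob P P0 \<Theta> X0 \<pi> \<theta>s tr * (c * W tr))"
    unfolding expect_Suc
    by (intro sum_mono mult_left_mono W_step traj_prob_nonneg) (auto simp: trajs_def)
  also have "\<dots> = c * expect n W" by (simp add: expect_def sum_distrib_left algebra_simps)
  also have "\<dots> \<le> c * (c ^ n * W [])" using Suc \<open>0 \<le> c\<close> by (intro mult_left_mono) auto
  finally show ?case by simp
qed

lemma expect_const_le: "0 \<le> c \<Longrightarrow> expect n (\<lambda>_. c) \<le> c"
  using expect_supermartingale[of 1 "\<lambda>_. c" n] sum_step_prob by (simp add: sum_distrib_right[symmetric])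

subsection \<open>The constants c0 and B\<close>

definition entropy_lb :: real where
  "entropy_lb = min (ln (1/\<Delta>P) * \<Delta>P) (ln (1/(1 - \<Delta>P)) * (1 - \<Delta>P))"

definition gap_const :: real where
  "gap_const = entropy_lb / (Max \<Theta>)\<^sup>2"

definition llr_range :: real where
  "llr_range = 2 * max
     (Max ((\<lambda>\<theta>. SUP p\<in>{\<Delta>P..1 - \<Delta>P}. \<bar>ln (p powr (1/\<theta>) / p powr (1/\<theta>s))\<bar>) ` \<Theta>))
     (Max ((\<lambda>\<theta>. SUP p\<in>{\<Delta>P..1 - \<Delta>P}. \<bar>ln ((1 - p powr (1/\<theta>)) / (1 - p powr (1/\<theta>s)))\<bar>) ` \<Theta>))"

definition min_sep :: real where
  "min_sep = Min ((\<lambda>\<theta>. \<bar>\<theta> - \<theta>s\<bar>) ` (\<Theta> - {\<theta>s}))"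

definition spread :: real where
  "spread = (Max \<Theta> - Min \<Theta>)\<^sup>2"

lemma gap_const_pos: "0 < gap_const"
proof -
  have "0 < ln (1/\<Delta>P)" "0 < ln (1/(1-\<Delta>P))" using \<Delta>P_pos \<Delta>P_half by simp_all
  then have "0 < entropy_lb" unfolding entropy_lb_def using \<Delta>P_pos \<Delta>P_half by simp
  moreover have "0 < Max \<Theta>" using Max_ge[OF \<Theta>_fin \<theta>s_in] \<Theta>_pos[OF \<theta>s_in] by simp
  ultimately show ?thesis unfolding gap_const_def by simp
qed

lemma powr_param_diff_ge:
  assumes "\<theta>1 \<in> \<Theta>" "\<theta>2 \<in> \<Theta>" "\<theta>2 \<le> \<theta>1" and p: "\<Delta>P \<le> p" "p \<le> 1 - \<Delta>P"
  shows "gap_const * (\<theta>1 - \<theta>2) \<le> p powr (1/\<theta>1) - p powr (1/\<theta>2)"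
proof -
  have t1: "1 \<le> \<theta>1" "\<theta>1 \<le> Max \<Theta>" and t2: "1 \<le> \<theta>2" "\<theta>2 \<le> Max \<Theta>"
    using assms \<Theta>_ge1 \<Theta>_fin by auto
  have "0 < p" "p < 1" using p \<Delta>P_pos \<Delta>P_half by auto
  moreover have "0 < 1/\<theta>1" "1/\<theta>1 \<le> 1/\<theta>2" "1/\<theta>2 \<le> 1" using t1 t2 assms(3)
    by (auto simp: field_simps)
  ultimately have diff: "p * (1/\<theta>2 - 1/\<theta>1) * (- ln p) \<le> p powr (1/\<theta>1) - p powr (1/\<theta>2)"
    by (rule powr_diff_ge)
  have "(\<theta>1 - \<theta>2) / (Max \<Theta>)\<^sup>2 \<le> (\<theta>1 - \<theta>2) / (\<theta>1 * \<theta>2)"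
    using t1 t2 assms(3) by (intro divide_left_mono) (auto simp: power2_eq_square mult_mono)
  also have "\<dots> = 1/\<theta>2 - 1/\<theta>1" using t1 t2 by (simp add: field_simps)
  moreover have "entropy_lb \<le> - p * ln p"
    unfolding entropy_lb_def using neg_mult_ln_ge_min_endpoints[OF \<Delta>P_pos p] .
  moreover have "0 \<le> - p * ln p" using \<open>0 < p\<close> \<open>p < 1\<close> by (simp add: mult_nonneg_nonpos)
  ultimately have "entropy_lb * ((\<theta>1 - \<theta>2) / (Max \<Theta>)\<^sup>2) \<le> (- p * ln p) * (1/\<theta>2 - 1/\<theta>1)"
    using assms(3) by (intro mult_mono) auto
  then show ?thesis using diff unfolding gap_const_def by (simp add: ac_simps)
qed

lemma abs_powr_param_diff_ge:
  assumes "\<theta> \<in> \<Theta>" and "\<Delta>P \<le> p" "p \<le> 1 - \<Delta>P"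
  shows "gap_const * \<bar>\<theta> - \<theta>s\<bar> \<le> \<bar>p powr (1/\<theta>) - p powr (1/\<theta>s)\<bar>"
  using powr_param_diff_ge[OF assms(1) \<theta>s_in _ assms(2,3)]
    powr_param_diff_ge[OF \<theta>s_in assms(1) _ assms(2,3)] gap_const_pos
  by (cases "\<theta>s \<le> \<theta>") auto

lemma powr_param_bounds:
  assumes "\<theta> \<in> \<Theta>" and p: "\<Delta>P \<le> p" "p \<le> 1 - \<Delta>P"
  shows "\<Delta>P \<le> p powr (1/\<theta>)" "p powr (1/\<theta>) \<le> 1"
    "1 - (1 - \<Delta>P) powr (1/\<theta>) \<le> 1 - p powr (1/\<theta>)" "1 - p powr (1/\<theta>) \<le> 1"
    "0 < 1 - (1 - \<Delta>P) powr (1/\<theta>)"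
proof -
  have t: "1 \<le> \<theta>" using assms \<Theta>_ge1 by auto
  have p01: "0 < p" "p < 1" using p \<Delta>P_pos \<Delta>P_half by auto
  have "p powr 1 \<le> p powr (1/\<theta>)" using t p01 by (intro powr_mono') auto
  then show "\<Delta>P \<le> p powr (1/\<theta>)" using p by simp
  show "p powr (1/\<theta>) \<le> 1" using p01 t by (simp add: powr_le1)
  have "p powr (1/\<theta>) \<le> (1 - \<Delta>P) powr (1/\<theta>)" using p p01 t by (intro powr_mono2) auto
  then show "1 - (1 - \<Delta>P) powr (1/\<theta>) \<le> 1 - p powr (1/\<theta>)" by simp
  show "1 - p powr (1/\<theta>) \<le> 1" using p01 by simp
  have "(1 - \<Delta>P) powr (1/\<theta>) < 1 powr (1/\<theta>)" using t \<Delta>P_pos \<Delta>P_half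
    by (intro powr_less_mono2) auto
  then show "0 < 1 - (1 - \<Delta>P) powr (1/\<theta>)" by simp
qed

lemma abs_llr_le_llr_range:
  assumes "\<theta> \<in> \<Theta>" and p: "\<Delta>P \<le> p" "p \<le> 1 - \<Delta>P"
  shows "\<bar>ln (p powr (1/\<theta>) / p powr (1/\<theta>s))\<bar> \<le> llr_range / 2"
    "\<bar>ln ((1 - p powr (1/\<theta>)) / (1 - p powr (1/\<theta>s)))\<bar> \<le> llr_range / 2"
proof -
  have p_in: "p \<in> {\<Delta>P..1 - \<Delta>P}" using p by simp
  have "\<bar>ln (p powr (1/\<theta>) / p powr (1/\<theta>s))\<bar>
      \<le> Max ((\<lambda>\<theta>. SUP p\<in>{\<Delta>P..1 - \<Delta>P}. \<bar>ln (p powr (1/\<theta>) / p powr (1/\<theta>s))\<bar>) ` \<Theta>)"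
    using \<Theta>_fin assms(1) p_in
  proof (rule le_Max_SUP)
    fix p assume "p \<in> {\<Delta>P..1 - \<Delta>P}"
    then show "\<bar>ln (p powr (1/\<theta>) / p powr (1/\<theta>s))\<bar> \<le> - ln \<Delta>P - ln \<Delta>P"
      using powr_param_bounds[OF assms(1)] powr_param_bounds[OF \<theta>s_in] \<Delta>P_pos
      by (intro abs_ln_div_le) auto
  qed
  then show "\<bar>ln (p powr (1/\<theta>) / p powr (1/\<theta>s))\<bar> \<le> llr_range / 2"
    unfolding llr_range_def by simp
  have "\<bar>ln ((1 - p powr (1/\<theta>)) / (1 - p powr (1/\<theta>s)))\<bar>
      \<le> Max ((\<lambda>\<theta>. SUP p\<in>{\<Delta>P..1 - \<Delta>P}.
                   \<bar>ln ((1 - p powr (1/\<theta>)) / (1 - p powr (1/\<theta>s)))\<bar>) ` \<Theta>)"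
    using \<Theta>_fin assms(1) p_in
  proof (rule le_Max_SUP)
    fix p assume "p \<in> {\<Delta>P..1 - \<Delta>P}"
    then show "\<bar>ln ((1 - p powr (1/\<theta>)) / (1 - p powr (1/\<theta>s)))\<bar>
       \<le> - ln (1 - (1 - \<Delta>P) powr (1/\<theta>)) - ln (1 - (1 - \<Delta>P) powr (1/\<theta>s))"
      using powr_param_bounds[OF assms(1)] powr_param_bounds[OF \<theta>s_in]
      by (intro abs_ln_div_le) auto
  qed
  then show "\<bar>ln ((1 - p powr (1/\<theta>)) / (1 - p powr (1/\<theta>s)))\<bar> \<le> llr_range / 2"
    unfolding llr_range_def by simp
qed

lemma llr_range_pos:
  assumes "\<theta> \<in> \<Theta>" "\<theta> \<noteq> \<theta>s"
  shows "0 < llr_range"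
proof -
  have "ln (\<Delta>P powr (1/\<theta>) / \<Delta>P powr (1/\<theta>s)) = (1/\<theta> - 1/\<theta>s) * ln \<Delta>P"
    using \<Delta>P_pos by (simp add: ln_div algebra_simps)
  moreover have "1/\<theta> - 1/\<theta>s \<noteq> 0" using assms \<Theta>_pos[OF assms(1)] \<Theta>_pos[OF \<theta>s_in] by auto
  moreover have "ln \<Delta>P \<noteq> 0" using \<Delta>P_pos \<Delta>P_half by simp
  ultimately have "0 < \<bar>ln (\<Delta>P powr (1/\<theta>) / \<Delta>P powr (1/\<theta>s))\<bar>" by simp
  then show ?thesis
    using abs_llr_le_llr_range(1)[OF assms(1), of \<Delta>P] \<Delta>P_half by simp
qed

subsection \<open>The exponential supermartingale of the log-likelihood ratio\<close>

lemma expected_llr_increment_le: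
  fixes \<theta> p :: real
  assumes \<theta>: "\<theta> \<in> \<Theta>" and p: "\<Delta>P \<le> p" "p \<le> 1 - \<Delta>P"
  defines "q \<equiv> p powr (1/\<theta>)" and "qs \<equiv> p powr (1/\<theta>s)"
  shows "qs * ln (q/qs) + (1-qs) * ln ((1-q)/(1-qs)) \<le> - 2 * gap_const\<^sup>2 * (\<theta> - \<theta>s)\<^sup>2"
proof -
  have "0 < q" "q < 1" "0 < qs" "qs < 1"
    using powr_param_bounds[OF \<theta> p] powr_param_bounds[OF \<theta>s_in p] \<Delta>P_pos
    unfolding q_def qs_def by linarith+
  then have "qs * ln (q/qs) + (1-qs) * ln ((1-q)/(1-qs)) \<le> - 2 * (q - qs)\<^sup>2"
    using bernoulli_pinsker[of qs q] by simp
  moreover have "(gap_const * \<bar>\<theta> - \<theta>s\<bar>)\<^sup>2 \<le> \<bar>q - qs\<bar>\<^sup>2"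
    using abs_powr_param_diff_ge[OF \<theta> p] gap_const_pos
    by (intro power_mono) (auto simp: q_def qs_def)
  ultimately show ?thesis by (simp add: power_mult_distrib)
qed

lemma one_step_exp_moment_le:
  assumes a: "a \<in> S" and \<theta>: "\<theta> \<in> \<Theta>" and "0 \<le> l"
  shows "(\<Sum>s\<in>S. trans_model P X a \<theta>s s
           * exp (l * (ln (trans_model P X a \<theta> s / trans_model P X a \<theta>s s)
                       + 2 * gap_const\<^sup>2 * (\<theta> - \<theta>s)\<^sup>2)))
         \<le> exp (l\<^sup>2 * llr_range\<^sup>2 / 8)"
proof -
  define p where "p = P X a"
  define q where "q = p powr (1/\<theta>)"
  define qs where "qs = p powr (1/\<theta>s)"
  define D where "D = 2 * gap_const\<^sup>2 * (\<theta> - \<theta>s)\<^sup>2"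
  define y1 where "y1 = ln (q/qs)"
  define y2 where "y2 = ln ((1-q)/(1-qs))"
  have p: "\<Delta>P \<le> p" "p \<le> 1-\<Delta>P" using P_bounds[OF a] by (auto simp: p_def)
  have "0 \<le> qs" "qs \<le> 1" using powr_param_bounds[OF \<theta>s_in p] \<Delta>P_pos unfolding qs_def by linarith+
  have "(\<Sum>s\<in>S. trans_model P X a \<theta>s s * exp (l * (ln (trans_model P X a \<theta> s / trans_model P X a \<theta>s s) + D)))
      = qs * exp (l * (y1 + D)) + (1 - qs) * exp (l * (y2 + D))"
    unfolding y1_def y2_def q_def qs_def p_def by (rule sum_trans_model_ratio[OF a])
  also have "\<dots> = exp (l * D) * (qs * exp (l * y1) + (1 - qs) * exp (l * y2))"
    by (simp add: algebra_simps flip: exp_add)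
  also have "\<dots> \<le> exp (l * D) * exp (l * (qs * y1 + (1 - qs) * y2) + l\<^sup>2 * (y1 - y2)\<^sup>2 / 8)"
    using two_point_hoeffding[of qs l y1 y2] \<open>0 \<le> qs\<close> \<open>qs \<le> 1\<close> \<open>0 \<le> l\<close>
    by (intro mult_left_mono) auto
  also have "\<dots> = exp (l * (D + (qs * y1 + (1 - qs) * y2)) + l\<^sup>2 * (y1 - y2)\<^sup>2 / 8)"
    by (simp add: exp_add[symmetric] algebra_simps)
  also have "\<dots> \<le> exp (l\<^sup>2 * llr_range\<^sup>2 / 8)"
  proof -
    have "D + (qs * y1 + (1 - qs) * y2) \<le> 0"
      using expected_llr_increment_le[OF \<theta> p] unfolding D_def y1_def y2_def q_def qs_def by simp
    then have drift: "l * (D + (qs * y1 + (1 - qs) * y2)) \<le> 0"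
      using \<open>0 \<le> l\<close> by (simp add: mult_nonneg_nonpos)
    have "\<bar>y1 - y2\<bar> \<le> llr_range"
      using abs_llr_le_llr_range[OF \<theta> p] unfolding y1_def y2_def q_def qs_def by linarith
    then have "(y1 - y2)\<^sup>2 \<le> llr_range\<^sup>2"
      by (subst power2_le_iff_abs_le) auto
    then have "l\<^sup>2 * (y1 - y2)\<^sup>2 / 8 \<le> l\<^sup>2 * llr_range\<^sup>2 / 8"
      by (intro divide_right_mono mult_left_mono) auto
    then show ?thesis using drift by simp
  qed
  finally show ?thesis unfolding D_def .
qed

definition llr :: "real \<Rightarrow> 's step list \<Rightarrow> real" where
  "llr \<theta> tr = ln (likelihood P X0 tr \<theta> / likelihood P X0 tr \<theta>s)"

definition llr_process :: "real \<Rightarrow> real \<Rightarrow> 's step list \<Rightarrow> real" where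
  "llr_process \<theta> l tr = exp (l * (llr \<theta> tr + 2 * gap_const\<^sup>2 * (\<theta> - \<theta>s)\<^sup>2 * length tr))"

lemma llr_snoc:
  assumes tr: "set tr \<subseteq> steps" and x: "x \<in> steps" and \<theta>: "\<theta> \<in> \<Theta>"
  shows "llr \<theta> (tr @ [x]) = llr \<theta> tr + ln (trans_model P (hist X0 tr) (rec_of x) \<theta> (obs_of x)
             / trans_model P (hist X0 tr) (rec_of x) \<theta>s (obs_of x))"
proof -
  have "0 < likelihood P X0 tr \<theta>" "0 < likelihood P X0 tr \<theta>s"
    using likelihood_pos[OF tr] \<theta> \<theta>s_in by auto
  moreover have "0 < trans_model P (hist X0 tr) (rec_of x) \<theta> (obs_of x)"
    "0 < trans_model P (hist X0 tr) (rec_of x) \<theta>s (obs_of x)"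
    using trans_model_pos steps_memD[OF x] \<Theta>_pos \<theta> \<theta>s_in by auto
  ultimately show ?thesis unfolding llr_def likelihood_snoc by (simp add: ln_div ln_mult)
qed

lemma llr_process_step:
  assumes tr: "set tr \<subseteq> steps" and \<theta>: "\<theta> \<in> \<Theta>" and "0 \<le> l"
  shows "(\<Sum>x\<in>steps. step_prob tr x * llr_process \<theta> l (tr @ [x]))
           \<le> exp (l\<^sup>2 * llr_range\<^sup>2 / 8) * llr_process \<theta> l tr"
proof -
  define G where "G = (\<lambda>a s. exp (l * (ln (trans_model P (hist X0 tr) a \<theta> s
                / trans_model P (hist X0 tr) a \<theta>s s) + 2 * gap_const\<^sup>2 * (\<theta> - \<theta>s)\<^sup>2)))"
  have "llr_process \<theta> l (tr @ [x]) = llr_process \<theta> l tr * G (rec_of x) (obs_of x)"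
    if "x \<in> steps" for x
    unfolding llr_process_def G_def llr_snoc[OF tr that \<theta>]
    by (simp add: exp_add[symmetric] algebra_simps)
  then have "(\<Sum>x\<in>steps. step_prob tr x * llr_process \<theta> l (tr @ [x]))
      = llr_process \<theta> l tr * (\<Sum>x\<in>steps. step_prob tr x * G (rec_of x) (obs_of x))"
    by (simp add: sum_distrib_left algebra_simps)
  also have "\<dots> = llr_process \<theta> l tr
      * (\<Sum>a\<in>S. \<pi> tr a * (\<Sum>s\<in>S. trans_model P (hist X0 tr) a \<theta>s s * G a s))"
    by (simp add: sum_step_prob_marginal[OF tr])
  also have "\<dots> \<le> llr_process \<theta> l tr * (\<Sum>a\<in>S. \<pi> tr a * exp (l\<^sup>2 * llr_range\<^sup>2 / 8))"
    unfolding G_def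
    by (intro mult_left_mono sum_mono one_step_exp_moment_le \<theta> \<open>0 \<le> l\<close> \<pi>_nonneg)
      (auto simp: llr_process_def)
  also have "\<dots> = exp (l\<^sup>2 * llr_range\<^sup>2 / 8) * llr_process \<theta> l tr"
    by (simp add: sum_distrib_right[symmetric] \<pi>_distr)
  finally show ?thesis .
qed

lemma expect_llr_process_le:
  assumes "\<theta> \<in> \<Theta>" "0 \<le> l"
  shows "expect n (llr_process \<theta> l) \<le> exp (l\<^sup>2 * llr_range\<^sup>2 / 8) ^ n"
  using expect_supermartingale[of "exp (l\<^sup>2 * llr_range\<^sup>2 / 8)" "llr_process \<theta> l" n]
    llr_process_step[OF _ assms]
  by (simp add: llr_process_def llr_def likelihood_Nil)

lemma expect_min_one_exp_llr_le:
  assumes \<theta>: "\<theta> \<in> \<Theta>" and "0 \<le> l" "0 \<le> r"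
  shows "expect n (\<lambda>tr. min 1 (r * exp (llr \<theta> tr)))
     \<le> r * exp (- 2 * gap_const\<^sup>2 * (\<theta> - \<theta>s)\<^sup>2 * n + \<epsilon>)
        + exp (- l * \<epsilon>) * exp (l\<^sup>2 * llr_range\<^sup>2 / 8) ^ n"
proof -
  define A where "A = - 2 * gap_const\<^sup>2 * (\<theta> - \<theta>s)\<^sup>2 * n + \<epsilon>"
  have "min 1 (r * exp (llr \<theta> tr)) \<le> r * exp A + exp (- l * \<epsilon>) * llr_process \<theta> l tr"
    if "tr \<in> trajs n" for tr
    using min_one_le_split[OF \<open>0 \<le> r\<close> \<open>0 \<le> l\<close>, of "llr \<theta> tr" A] that
    unfolding llr_process_def A_def trajs_def by (simp add: exp_add[symmetric] algebra_simps)
  then have "expect n (\<lambda>tr. min 1 (r * exp (llr \<theta> tr)))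
      \<le> expect n (\<lambda>_. r * exp A) + exp (- l * \<epsilon>) * expect n (llr_process \<theta> l)"
    by (subst expect_cmult[symmetric], subst expect_add[symmetric]) (rule expect_mono)
  also have "\<dots> \<le> r * exp A + exp (- l * \<epsilon>) * exp (l\<^sup>2 * llr_range\<^sup>2 / 8) ^ n"
    using expect_const_le[of "r * exp A" n] expect_llr_process_le[OF \<theta> \<open>0 \<le> l\<close>, of n] \<open>0 \<le> r\<close>
    by (intro add_mono mult_left_mono) auto
  finally show ?thesis unfolding A_def .
qed

subsection \<open>The posterior mean squared error\<close>

definition posterior_sq_err :: "'s step list \<Rightarrow> real" where
  "posterior_sq_err tr = (\<Sum>\<theta>\<in>\<Theta>. posterior P P0 \<Theta> X0 tr \<theta> * (\<theta> - \<theta>s)\<^sup>2)"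

text \<open>The last sample is drawn from the posterior, so it may be averaged out.\<close>

lemma expected_sq_err_eq_expect:
  "expected_sq_err S P P0 \<Theta> X0 \<pi> \<theta>s (Suc n) = expect (Suc n) posterior_sq_err"
proof -
  have "expected_sq_err S P P0 \<Theta> X0 \<pi> \<theta>s (Suc n) = expect (Suc n) (\<lambda>tr. (smp_of (last tr) - \<theta>s)\<^sup>2)"
    unfolding expected_sq_err_def expect_def trajs_def steps_def by simp
  also have "\<dots> = expect (Suc n) posterior_sq_err"
    unfolding expect_Suc
  proof (rule sum.cong[OF refl])
    fix tr assume "tr \<in> trajs n"
    then have tr: "set tr \<subseteq> steps" by (simp add: trajs_def)
    have "(\<Sum>\<theta>\<in>\<Theta>. step_prob tr (a,s,\<theta>) * (smp_of (last (tr @ [(a,s,\<theta>)])) - \<theta>s)\<^sup>2)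
        = (\<Sum>\<theta>\<in>\<Theta>. step_prob tr (a,s,\<theta>) * posterior_sq_err (tr @ [(a,s,\<theta>)]))"
      if "a \<in> S" "s \<in> S" for a s
    proof -
      define Q where "Q = posterior P P0 \<Theta> X0 (tr @ [(a,s,\<theta>s)])"
      define c where "c = \<pi> tr a * trans_model P (hist X0 tr) a \<theta>s s"
      have step: "step_prob tr (a,s,\<theta>) = c * Q \<theta>" for \<theta>
        unfolding step_prob_def c_def Q_def rec_of_def obs_of_def smp_of_def
        by (subst posterior_snoc_sample_indep[where v=\<theta>s]) simp
      define H where "H = posterior_sq_err (tr @ [(a,s,\<theta>s)])"
      have err: "posterior_sq_err (tr @ [(a,s,\<theta>)]) = H" for \<theta>
        unfolding posterior_sq_err_def H_def
        by (rule sum.cong[OF refl], subst posterior_snoc_sample_indep[where v=\<theta>s]) simp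
      have "(\<Sum>\<theta>\<in>\<Theta>. Q \<theta>) = 1"
        unfolding Q_def using tr that \<theta>s_in by (intro posterior_sum) (auto simp: steps_def)
      then have "(\<Sum>\<theta>\<in>\<Theta>. c * Q \<theta> * H) = c * H"
        by (simp flip: sum_distrib_left sum_distrib_right)
      moreover have "(\<Sum>\<theta>\<in>\<Theta>. c * Q \<theta> * (smp_of (last (tr @ [(a,s,\<theta>)])) - \<theta>s)\<^sup>2) = c * H"
        by (simp add: H_def posterior_sq_err_def Q_def smp_of_def sum_distrib_left mult.assoc)
      ultimately show ?thesis unfolding step err by simp
    qed
    then show "traj_prob P P0 \<Theta> X0 \<pi> \<theta>s tr
          * (\<Sum>x\<in>steps. step_prob tr x * (smp_of (last (tr @ [x])) - \<theta>s)\<^sup>2)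
        = traj_prob P P0 \<Theta> X0 \<pi> \<theta>s tr * (\<Sum>x\<in>steps. step_prob tr x * posterior_sq_err (tr @ [x]))"
      unfolding sum_steps by simp
  qed
  finally show ?thesis .
qed

lemma sq_diff_le_spread:
  assumes "\<theta> \<in> \<Theta>"
  shows "(\<theta> - \<theta>s)\<^sup>2 \<le> spread"
proof -
  have "\<bar>\<theta> - \<theta>s\<bar> \<le> Max \<Theta> - Min \<Theta>"
    using Max_ge[OF \<Theta>_fin assms] Min_le[OF \<Theta>_fin assms]
      Max_ge[OF \<Theta>_fin \<theta>s_in] Min_le[OF \<Theta>_fin \<theta>s_in] by linarith
  then show ?thesis unfolding spread_def by (subst power2_le_iff_abs_le) auto
qed

lemma expect_posterior_sq_err_le_spread: "expect n posterior_sq_err \<le> spread"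
proof -
  have "posterior_sq_err tr \<le> spread" if "set tr \<subseteq> steps" for tr
  proof -
    have "posterior_sq_err tr \<le> (\<Sum>\<theta>\<in>\<Theta>. posterior P P0 \<Theta> X0 tr \<theta> * spread)"
      unfolding posterior_sq_err_def
      by (intro sum_mono mult_left_mono sq_diff_le_spread posterior_nonneg that)
    also have "\<dots> = spread" by (simp add: sum_distrib_right[symmetric] posterior_sum[OF that])
    finally show ?thesis .
  qed
  then have "expect n posterior_sq_err \<le> expect n (\<lambda>_. spread)"
    by (intro expect_mono) (simp add: trajs_def)
  also have "\<dots> \<le> spread" by (rule expect_const_le) (simp add: spread_def)
  finally show ?thesis .
qed

lemma posterior_le_prior_ratio_exp_llr:
  assumes tr: "set tr \<subseteq> steps" and \<theta>: "\<theta> \<in> \<Theta>"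
  shows "posterior P P0 \<Theta> X0 tr \<theta> \<le> P0 \<theta> / P0 \<theta>s * exp (llr \<theta> tr)"
proof -
  have L: "0 < likelihood P X0 tr \<theta>" "0 < likelihood P X0 tr \<theta>s"
    using likelihood_pos[OF tr] \<theta> \<theta>s_in by auto
  have "P0 \<theta>s * likelihood P X0 tr \<theta>s \<le> (\<Sum>\<theta>'\<in>\<Theta>. P0 \<theta>' * likelihood P X0 tr \<theta>')"
    using \<theta>s_in \<Theta>_fin P0_pos likelihood_pos[OF tr]
    by (intro member_le_sum) (auto intro!: mult_nonneg_nonneg less_imp_le)
  then have "posterior P P0 \<Theta> X0 tr \<theta> \<le> P0 \<theta> * likelihood P X0 tr \<theta> / (P0 \<theta>s * likelihood P X0 tr \<theta>s)"
    unfolding posterior_def using P0_pos[OF \<theta>] P0_pos[OF \<theta>s_in] L evidence_pos[OF tr]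
    by (intro divide_left_mono) (auto simp: zero_le_mult_iff zero_less_mult_iff)
  also have "\<dots> = P0 \<theta> / P0 \<theta>s * exp (llr \<theta> tr)"
    unfolding llr_def using L by simp
  finally show ?thesis .
qed

lemma expect_posterior_sq_err_le_sum:
  "expect n posterior_sq_err
     \<le> (\<Sum>\<theta>\<in>\<Theta>-{\<theta>s}. (\<theta> - \<theta>s)\<^sup>2 * expect n (\<lambda>tr. min 1 (P0 \<theta> / P0 \<theta>s * exp (llr \<theta> tr))))"
proof -
  have "posterior_sq_err tr \<le> (\<Sum>\<theta>\<in>\<Theta>-{\<theta>s}. (\<theta> - \<theta>s)\<^sup>2 * min 1 (P0 \<theta> / P0 \<theta>s * exp (llr \<theta> tr)))"
    if tr: "set tr \<subseteq> steps" for tr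
  proof -
    have "posterior_sq_err tr = (\<Sum>\<theta>\<in>\<Theta>-{\<theta>s}. (\<theta> - \<theta>s)\<^sup>2 * posterior P P0 \<Theta> X0 tr \<theta>)"
      unfolding posterior_sq_err_def
      by (simp add: sum.remove[OF \<Theta>_fin \<theta>s_in] mult.commute)
    also have "\<dots> \<le> (\<Sum>\<theta>\<in>\<Theta>-{\<theta>s}. (\<theta> - \<theta>s)\<^sup>2 * min 1 (P0 \<theta> / P0 \<theta>s * exp (llr \<theta> tr)))"
      using posterior_le_1[OF tr] posterior_le_prior_ratio_exp_llr[OF tr]
      by (intro sum_mono mult_left_mono) auto
    finally show ?thesis .
  qed
  then have "expect n posterior_sq_err
      \<le> expect n (\<lambda>tr. \<Sum>\<theta>\<in>\<Theta>-{\<theta>s}. (\<theta> - \<theta>s)\<^sup>2 * min 1 (P0 \<theta> / P0 \<theta>s * exp (llr \<theta> tr)))"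
    by (intro expect_mono) (simp add: trajs_def)
  then show ?thesis by (simp add: expect_sum expect_cmult)
qed

lemma weighted_posterior_weight_le:
  assumes \<theta>: "\<theta> \<in> \<Theta> - {\<theta>s}" and "0 < n" "0 \<le> l"
  shows "(\<theta> - \<theta>s)\<^sup>2 * expect n (\<lambda>tr. min 1 (P0 \<theta> / P0 \<theta>s * exp (llr \<theta> tr)))
     \<le> P0 \<theta> / P0 \<theta>s * (exp (- gap_const\<^sup>2 * min_sep\<^sup>2 * n + \<epsilon>) / (exp 1 * gap_const\<^sup>2 * n))
       + spread * (exp (- l * \<epsilon>) * exp (l\<^sup>2 * llr_range\<^sup>2 / 8) ^ n)"
proof -
  define r where "r = P0 \<theta> / P0 \<theta>s"
  define d where "d = (\<theta> - \<theta>s)\<^sup>2"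
  have "0 \<le> r" using P0_pos \<theta> \<theta>s_in by (simp add: r_def less_imp_le)
  have "min_sep \<le> \<bar>\<theta> - \<theta>s\<bar>" unfolding min_sep_def using \<theta> \<Theta>_fin by (auto intro: Min_le)
  moreover have "0 \<le> min_sep" unfolding min_sep_def using \<theta> \<Theta>_fin by (subst Min_ge_iff) auto
  ultimately have "min_sep\<^sup>2 \<le> d" unfolding d_def using power_mono[of min_sep "\<bar>\<theta> - \<theta>s\<bar>" 2] by simp
  then have "gap_const\<^sup>2 * min_sep\<^sup>2 * n \<le> gap_const\<^sup>2 * d * n"
    by (intro mult_right_mono mult_left_mono) auto
  then have decay: "exp (- (gap_const\<^sup>2 * d * n)) \<le> exp (- gap_const\<^sup>2 * min_sep\<^sup>2 * n)" by simp
  have peak: "d * exp (- (gap_const\<^sup>2 * d * n)) \<le> 1 / (exp 1 * gap_const\<^sup>2 * n)"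
    using sq_mult_exp_neg_le[of "gap_const\<^sup>2" n "\<theta> - \<theta>s"] gap_const_pos \<open>0 < n\<close>
    by (simp add: d_def)
  have "d * expect n (\<lambda>tr. min 1 (r * exp (llr \<theta> tr)))
      \<le> d * (r * exp (- 2 * gap_const\<^sup>2 * d * n + \<epsilon>)
             + exp (- l * \<epsilon>) * exp (l\<^sup>2 * llr_range\<^sup>2 / 8) ^ n)"
    using expect_min_one_exp_llr_le[of \<theta> l r n \<epsilon>] \<theta> \<open>0 \<le> l\<close> \<open>0 \<le> r\<close>
    by (intro mult_left_mono) (auto simp: d_def)
  also have "\<dots> = r * ((d * exp (- (gap_const\<^sup>2 * d * n))) * exp (- (gap_const\<^sup>2 * d * n)) * exp \<epsilon>)
      + d * (exp (- l * \<epsilon>) * exp (l\<^sup>2 * llr_range\<^sup>2 / 8) ^ n)"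
    by (simp add: algebra_simps flip: exp_add)
  also have "\<dots> \<le> r * (1 / (exp 1 * gap_const\<^sup>2 * n) * exp (- gap_const\<^sup>2 * min_sep\<^sup>2 * n) * exp \<epsilon>)
      + spread * (exp (- l * \<epsilon>) * exp (l\<^sup>2 * llr_range\<^sup>2 / 8) ^ n)"
    using peak decay sq_diff_le_spread[of \<theta>] \<theta> \<open>0 \<le> r\<close> \<open>0 < n\<close>
    by (intro add_mono mult_left_mono mult_right_mono mult_mono) (auto simp: d_def)
  finally show ?thesis
    unfolding r_def d_def exp_add[of "- gap_const\<^sup>2 * min_sep\<^sup>2 * n" \<epsilon>] by (simp add: ac_simps)
qed

lemma expect_posterior_sq_err_le:
  assumes "0 < n" "0 \<le> l"
  shows "expect n posterior_sq_err
     \<le> (1 - P0 \<theta>s) / P0 \<theta>s * (exp (- gap_const\<^sup>2 * min_sep\<^sup>2 * n + \<epsilon>) / (exp 1 * gap_const\<^sup>2 * n))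
       + card (\<Theta> - {\<theta>s}) * spread * (exp (- l * \<epsilon>) * exp (l\<^sup>2 * llr_range\<^sup>2 / 8) ^ n)"
proof -
  have prior_rest: "(\<Sum>\<theta>\<in>\<Theta>-{\<theta>s}. P0 \<theta>) = 1 - P0 \<theta>s"
    using sum.remove[OF \<Theta>_fin \<theta>s_in, of P0] P0_sum by simp
  note expect_posterior_sq_err_le_sum[of n]
  also have "(\<Sum>\<theta>\<in>\<Theta>-{\<theta>s}. (\<theta> - \<theta>s)\<^sup>2 * expect n (\<lambda>tr. min 1 (P0 \<theta> / P0 \<theta>s * exp (llr \<theta> tr))))
      \<le> (\<Sum>\<theta>\<in>\<Theta>-{\<theta>s}. P0 \<theta> / P0 \<theta>s
             * (exp (- gap_const\<^sup>2 * min_sep\<^sup>2 * n + \<epsilon>) / (exp 1 * gap_const\<^sup>2 * n))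
           + spread * (exp (- l * \<epsilon>) * exp (l\<^sup>2 * llr_range\<^sup>2 / 8) ^ n))"
    by (intro sum_mono weighted_posterior_weight_le assms)
  finally show ?thesis
    by (simp add: sum.distrib sum_divide_distrib[symmetric] sum_distrib_right[symmetric] prior_rest)
qed

lemma chernoff_term_le:
  assumes "0 < n" and large: "1 \<le> card \<Theta> * spread * (real n)\<^sup>2"
  defines "\<epsilon> \<equiv> sqrt (2 * llr_range\<^sup>2 * n * ln (card \<Theta> * spread * (real n)\<^sup>2))"
  obtains l where "0 \<le> l"
    "card (\<Theta> - {\<theta>s}) * spread * (exp (- l * \<epsilon>) * exp (l\<^sup>2 * llr_range\<^sup>2 / 8) ^ n) \<le> 1 / (real n)\<^sup>2"
proof -
  have "0 < spread" using large by (cases "spread = 0") (auto simp: spread_def)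
  then have "\<Theta> \<noteq> {\<theta>s}" by (auto simp: spread_def)
  then obtain \<theta> where "\<theta> \<in> \<Theta>" "\<theta> \<noteq> \<theta>s" using \<theta>s_in by blast
  then have "0 < llr_range" by (rule llr_range_pos)
  then obtain l where "0 \<le> l" and l: "exp (- l * \<epsilon>) * exp (l\<^sup>2 * llr_range\<^sup>2 / 8) ^ n
      \<le> exp (- ln (card \<Theta> * spread * (real n)\<^sup>2))"
    using chernoff_parameter_exists[of llr_range n "ln (card \<Theta> * spread * (real n)\<^sup>2)" \<epsilon>]
      large \<open>0 < n\<close> unfolding \<epsilon>_def by auto
  have "card (\<Theta> - {\<theta>s}) * spread * (exp (- l * \<epsilon>) * exp (l\<^sup>2 * llr_range\<^sup>2 / 8) ^ n)
      \<le> card \<Theta> * spread * (1 / (card \<Theta> * spread * (real n)\<^sup>2))"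
    using l large \<open>0 < spread\<close> \<Theta>_fin
    by (intro mult_mono) (auto simp: exp_minus inverse_eq_divide card_Diff_subset_Int)
  also have "\<dots> = 1 / (real n)\<^sup>2" using large by auto
  finally show thesis using that \<open>0 \<le> l\<close> by blast
qed

lemma expected_sq_err_le:
  assumes "2 < t"
  defines "\<epsilon> \<equiv> sqrt (2 * llr_range\<^sup>2 * t * ln (card \<Theta> * spread * (real t)\<^sup>2))"
  shows "expected_sq_err S P P0 \<Theta> X0 \<pi> \<theta>s t
     \<le> 3 / (exp 1 * gap_const\<^sup>2 * t) * ((1 - P0 \<theta>s) / P0 \<theta>s)
         * exp (- gap_const\<^sup>2 * min_sep\<^sup>2 * t + \<epsilon>) + 1 / (real t)\<^sup>2"
proof -
  define R where "R = 3 / (exp 1 * gap_const\<^sup>2 * t) * ((1 - P0 \<theta>s) / P0 \<theta>s)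
                      * exp (- gap_const\<^sup>2 * min_sep\<^sup>2 * t + \<epsilon>)"
  have "0 < t" "0 < P0 \<theta>s" using assms P0_pos \<theta>s_in by auto
  have "P0 \<theta>s \<le> 1"
    using P0_sum member_le_sum[OF \<theta>s_in, of P0] \<Theta>_fin P0_pos by (simp add: less_imp_le)
  obtain m where "t = Suc m" using assms by (cases t) auto
  then have "expected_sq_err S P P0 \<Theta> X0 \<pi> \<theta>s t = expect t posterior_sq_err"
    using expected_sq_err_eq_expect by simp
  also have "\<dots> \<le> R + 1 / (real t)\<^sup>2"
  proof (cases "card \<Theta> * spread * (real t)\<^sup>2 < 1")
    case True
    have "1 \<le> card \<Theta>" using \<Theta>_fin \<theta>s_in by (auto simp: Suc_le_eq card_gt_0_iff)
    then have "spread * (real t)\<^sup>2 \<le> card \<Theta> * spread * (real t)\<^sup>2"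
      using mult_right_mono[of 1 "real (card \<Theta>)" "spread * (real t)\<^sup>2"] by (simp add: spread_def)
    then have "spread \<le> 1 / (real t)\<^sup>2" using True \<open>0 < t\<close> by (simp add: field_simps)
    moreover have "0 \<le> R" unfolding R_def using \<open>P0 \<theta>s \<le> 1\<close> \<open>0 < P0 \<theta>s\<close> by simp
    ultimately show ?thesis using expect_posterior_sq_err_le_spread[of t] by simp
  next
    case False
    then obtain l where "0 \<le> l" and "card (\<Theta> - {\<theta>s}) * spread
        * (exp (- l * \<epsilon>) * exp (l\<^sup>2 * llr_range\<^sup>2 / 8) ^ t) \<le> 1 / (real t)\<^sup>2"
      using chernoff_term_le[OF \<open>0 < t\<close>] unfolding \<epsilon>_def by force
    moreover have "(1 - P0 \<theta>s) / P0 \<theta>s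
        * (exp (- gap_const\<^sup>2 * min_sep\<^sup>2 * t + \<epsilon>) / (exp 1 * gap_const\<^sup>2 * t)) \<le> R"
      unfolding R_def using \<open>P0 \<theta>s \<le> 1\<close> \<open>0 < P0 \<theta>s\<close> \<open>0 < t\<close> gap_const_pos
      by (simp add: field_simps)
    ultimately show ?thesis
      using expect_posterior_sq_err_le[OF \<open>0 < t\<close> \<open>0 \<le> l\<close>, of \<epsilon>] by simp
  qed
  finally show ?thesis unfolding R_def .
qed

end

theorem lemma6:
  fixes S :: "'s set" and P :: "'s list \<Rightarrow> 's \<Rightarrow> real" and \<Delta>P :: real
    and \<Theta> :: "real set" and P0 :: "real \<Rightarrow> real" and \<theta>s :: real
    and X0 :: "'s list" and \<pi> :: "'s step list \<Rightarrow> 's \<Rightarrow> real" and t :: nat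
  assumes S_fin: "finite S"
    and P_distr: "\<And>X. (\<Sum>s\<in>S. P X s) = 1"
    and P_bounds: "\<And>X s. s \<in> S \<Longrightarrow> \<Delta>P \<le> P X s \<and> P X s \<le> 1 - \<Delta>P"
    and \<Delta>P_range: "0 < \<Delta>P" "\<Delta>P < 1/2"
    and \<Theta>_fin: "finite \<Theta>"
    and \<Theta>_ge1: "\<And>\<theta>. \<theta> \<in> \<Theta> \<Longrightarrow> 1 \<le> \<theta>"
    and P0_pos: "\<And>\<theta>. \<theta> \<in> \<Theta> \<Longrightarrow> 0 < P0 \<theta>"
    and P0_sum: "(\<Sum>\<theta>\<in>\<Theta>. P0 \<theta>) = 1"
    and \<theta>s_in: "\<theta>s \<in> \<Theta>"
    and \<pi>_nonneg: "\<And>tr a. 0 \<le> \<pi> tr a"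
    and \<pi>_distr: "\<And>tr. (\<Sum>a\<in>S. \<pi> tr a) = 1"
    and t_gt: "t > 2"
  defines "K \<equiv> real (card \<Theta>)"
    and "\<Delta>\<theta> \<equiv> Min ((\<lambda>\<theta>. \<bar>\<theta> - \<theta>s\<bar>) ` (\<Theta> - {\<theta>s}))"
    and "B \<equiv> 2 * max
          (Max ((\<lambda>\<theta>. SUP p\<in>{\<Delta>P..1 - \<Delta>P}. \<bar>ln (p powr (1/\<theta>) / p powr (1/\<theta>s))\<bar>) ` \<Theta>))
          (Max ((\<lambda>\<theta>. SUP p\<in>{\<Delta>P..1 - \<Delta>P}.
                   \<bar>ln ((1 - p powr (1/\<theta>)) / (1 - p powr (1/\<theta>s)))\<bar>) ` \<Theta>))"
    and "c0 \<equiv> min (ln (1/\<Delta>P) * \<Delta>P) (ln (1/(1 - \<Delta>P)) * (1 - \<Delta>P)) / (Max \<Theta>)\<^sup>2"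
    and "\<kappa> \<equiv> (Max \<Theta> - Min \<Theta>)\<^sup>2"
  shows "expected_sq_err S P P0 \<Theta> X0 \<pi> \<theta>s t
           \<le> 3 / (exp 1 * c0\<^sup>2 * real t) * ((1 - P0 \<theta>s) / P0 \<theta>s)
               * exp (- c0\<^sup>2 * \<Delta>\<theta>\<^sup>2 * real t + sqrt (2 * B\<^sup>2 * real t * ln (K * \<kappa> * (real t)\<^sup>2)))
             + 1 / (real t)\<^sup>2"
proof -
  interpret poi_recommendation S P \<Delta>P \<Theta> P0 \<theta>s X0 \<pi>
    using S_fin P_distr P_bounds \<Delta>P_range \<Theta>_fin \<Theta>_ge1 P0_pos P0_sum \<theta>s_in \<pi>_nonneg \<pi>_distr
    by unfold_locales auto
  show ?thesis
    using expected_sq_err_le[OF t_gt]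
    unfolding K_def \<Delta>\<theta>_def B_def c0_def \<kappa>_def
      llr_range_def gap_const_def entropy_lb_def min_sep_def spread_def .
qed

end
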